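(* Let $V$ be a space which is not CM. Then $V$ has only finitely many rational angles.
   Context: A space is a $2$-dimensional $\mathbb{Q}$-vector subspace $V\subset\mathbb{C}$ containing two $\mathbb{R}$-linearly independent vectors. $V$ is CM if there is $\lambda\in\mathbb{C}\setminus\mathbb{Q}$ with $\lambda V\subseteq V$. A rational angle of $V$ is an ordered pair of distinct lines through $0$, $(\mathbb{R}v_1,\mathbb{R}v_2)$ with $v_1,v_2\in V\setminus\{0\}$, $v_2/v_1\notin\mathbb{R}$, such that $\arg(v_2/v_1)$ is a rational multiple of $\pi$. *)

theory Defs
  imports "HOL-Analysis.Analysis"
begin

definition Q_subspace_dim2 :: "complex set \<Rightarrow> bool" where
  "Q_subspace_dim2 V \<longleftrightarrow>
     (\<exists>a b. V = {of_rat p * a + of_rat q * b | p q. True} \<and>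
            (\<forall>p q. of_rat p * a + of_rat q * b = 0 \<longrightarrow> p = 0 \<and> q = 0))"

definition is_space :: "complex set \<Rightarrow> bool" where
  "is_space V \<longleftrightarrow> Q_subspace_dim2 V \<and>
     (\<exists>v\<in>V. \<exists>w\<in>V. \<forall>r s::real. of_real r * v + of_real s * w = 0 \<longrightarrow> r = 0 \<and> s = 0)"

definition is_CM :: "complex set \<Rightarrow> bool" where
  "is_CM V \<longleftrightarrow> (\<exists>l. l \<notin> \<rat> \<and> (\<lambda>x. l * x) ` V \<subseteq> V)"

definition rline :: "complex \<Rightarrow> complex set" where
  "rline v = {of_real t * v | t. True}"

definition rational_angles :: "complex set \<Rightarrow> (complex set \<times> complex set) set" where
  "rational_angles V = {(rline v1, rline v2) | v1 v2.
      v1 \<in> V - {0} \<and> v2 \<in> V - {0} \<and> v2 / v1 \<notin> \<real> \<and>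
      (\<exists>q\<in>\<rat>. Arg (v2 / v1) = q * pi)}"

end

theory Submission
  imports Defs "Berlekamp_Zassenhaus.Factor_Bound"
begin

(* Let v1, v2 in V form a rational angle, put z = v2 / v1 and zeta = sgn z. Then zeta is a
   root of unity and the cotangent of the angle, Re z / Im z, lies in the Q-span of three
   numbers determined by a basis of V. A Q-basis of the span of these cotangents consists of
   finitely many of them, so all of them lie in the Q-span of the M-th roots of unity for a
   single M; this bounds the degree of every zeta over Q, and by Mignotte's bound (a divisor
   of x^n - 1 has Mahler measure at most 1) only finitely many roots of unity have bounded
   degree. So only finitely many zeta occur. The second line of the angle is the first one
   rotated by zeta. If zeta mapped three distinct lines of V to lines of V, a real multiple of
   zeta would map a basis of V, and hence V, into V, so V would be CM. Thus each zeta
   contributes only finitely many angles. *)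

section \<open>Roots of unity of bounded degree\<close>

(* HOL-Algebra, loaded with Berlekamp_Zassenhaus, also defines coeff and monom; hence the
   qualified names Polynomial.coeff and Polynomial.monom below. *)

interpretation of_rat_complex_poly_hom: map_poly_idom_hom "of_rat :: rat \<Rightarrow> complex"
  by unfold_locales

lemma finite_int_polys_bounded:
  "finite {g :: int poly. degree g \<le> D \<and> (\<forall>k. \<bar>Polynomial.coeff g k\<bar> \<le> C)}"
proof (rule finite_subset)
  show "{g :: int poly. degree g \<le> D \<and> (\<forall>k. \<bar>Polynomial.coeff g k\<bar> \<le> C)}
      \<subseteq> Poly ` {xs. set xs \<subseteq> {-C..C} \<and> length xs \<le> Suc D}"
  proof (clarify, rule image_eqI)
    fix g :: "int poly"
    assume g: "degree g \<le> D" "\<forall>k. \<bar>Polynomial.coeff g k\<bar> \<le> C"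
    have "set (coeffs g) \<subseteq> {-C..C}"
      using g(2) by (auto simp: in_set_conv_nth nth_coeffs_coeff abs_le_iff minus_le_iff)
    moreover have "length (coeffs g) \<le> Suc D"
      using g(1) length_coeffs_degree[of g] by (cases "g = 0") auto
    ultimately show "coeffs g \<in> {xs. set xs \<subseteq> {-C..C} \<and> length xs \<le> Suc D}" by simp
  qed simp
  show "finite (Poly ` {xs. set xs \<subseteq> {-C..C} \<and> length xs \<le> Suc D})"
    by (intro finite_imageI finite_lists_length_le) auto
qed

lemma lead_coeff_xn_minus_1:
  assumes "n > 0"
  shows "lead_coeff (Polynomial.monom 1 n - 1 :: 'a :: idom poly) = 1"
    and "Polynomial.monom 1 n - 1 \<noteq> (0 :: 'a poly)"
proof -
  have deg: "degree (Polynomial.monom 1 n - 1 :: 'a poly) = n"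
    using assms degree_add_eq_left[of "-1" "Polynomial.monom 1 n :: 'a poly"] by (simp add: degree_monom_eq)
  show lc: "lead_coeff (Polynomial.monom 1 n - 1 :: 'a poly) = 1"
    unfolding deg using assms by (simp add: coeff_monom)
  then show "Polynomial.monom 1 n - 1 \<noteq> (0 :: 'a poly)"
    by (metis coeff_0 zero_neq_one)
qed

lemma complex_roots_complex_root:
  "a \<in> set (complex_roots_complex p) \<Longrightarrow> poly p a = 0"
  by (subst complex_roots(1)[symmetric]) (auto simp: poly_prod_list prod_list_zero_iff)

lemma mahler_measure_xn_minus_1:
  assumes "n > 0"
  shows "mahler_measure (Polynomial.monom 1 n - 1 :: int poly) = 1"
proof -
  let ?f = "Polynomial.monom 1 n - 1 :: complex poly"
  have roots: "max 1 (cmod a) = 1" if "a \<in> set (complex_roots_complex ?f)" for a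
  proof -
    have "poly ?f a = 0"
      using that by (rule complex_roots_complex_root)
    then have "a ^ n = 1"
      by (simp add: poly_monom)
    then show ?thesis
      using power_eq_1_iff[of a n] assms by simp
  qed
  have lc: "lead_coeff ?f = 1"
    using assms by (rule lead_coeff_xn_minus_1)
  have "map (\<lambda>a. max 1 (cmod a)) (complex_roots_complex ?f) = map (\<lambda>_. 1) (complex_roots_complex ?f)"
    by (rule map_cong[OF refl roots])
  then have "mahler_measure_poly ?f = 1"
    unfolding mahler_measure_poly_def lc by (simp add: map_replicate_const)
  moreover have "map_poly of_int (Polynomial.monom 1 n - 1 :: int poly) = ?f"
    by (simp add: hom_distribs)
  ultimately show ?thesis
    unfolding mahler_measure_def by (simp only:)
qed

lemma coeff_bound_dvd_xn_minus_1:
  assumes "n > 0" and "g dvd Polynomial.monom 1 n - (1 :: int poly)"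
  shows "\<bar>Polynomial.coeff g k\<bar> \<le> 2 ^ degree g"
proof -
  have mm: "mahler_measure g \<le> 1"
    using mahler_measure_dvd[OF lead_coeff_xn_minus_1(2)[OF assms(1)] assms(2)]
    unfolding mahler_measure_xn_minus_1[OF assms(1)] .
  have "real_of_int \<bar>Polynomial.coeff g k\<bar> \<le> real (degree g choose k) * mahler_measure g"
    by (rule Mignotte_bound)
  also have "\<dots> \<le> real (degree g choose k)"
    using mm by (rule mult_left_le) simp
  also have "\<dots> \<le> real (2 ^ degree g)"
    using binomial_le_pow2 by (simp only: of_nat_le_iff)
  also have "\<dots> = real_of_int (2 ^ degree g)"
    by simp
  finally show ?thesis
    by (simp only: of_int_le_iff)
qed

lemma vanishing_int_divisor_of_xn_minus_1:
  fixes w :: complex and p :: "rat poly"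
  assumes n: "n > 0" and w: "w ^ n = 1" and p: "p \<noteq> 0" "poly (map_poly of_rat p) w = 0"
  obtains g :: "int poly"
    where "g dvd Polynomial.monom 1 n - 1" "degree g \<le> degree p" "poly (of_int_poly g) w = 0"
proof -
  let ?f = "Polynomial.monom 1 n - 1 :: rat poly"
  define h where "h = gcd p ?f"
  have "h dvd ?f"
    by (simp add: h_def)
  then obtain k where hk: "?f = h * k"
    by (elim dvdE)
  have hw: "poly (map_poly of_rat h) w = 0"
  proof -
    have "h = fst (bezout_coefficients p ?f) * p + snd (bezout_coefficients p ?f) * ?f"
      unfolding h_def by (simp add: bezout_coefficients_fst_snd)
    then show ?thesis
      using w p(2) by (simp add: hom_distribs poly_monom)
  qed
  obtain r g where rg: "rat_to_normalized_int_poly h = (r, g)"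
    by force
  note h_rg = rat_to_normalized_int_poly[OF rg]
  have "map_poly rat_of_int (Polynomial.monom 1 n - 1) = h * k"
    using hk by (simp add: hom_distribs)
  from rat_to_int_factor_explicit[OF this rg] have "g dvd Polynomial.monom 1 n - 1"
    by (metis dvd_triv_left)
  moreover have "degree g \<le> degree p"
    using h_rg(4) p(1) by (simp add: h_def dvd_imp_degree_le)
  moreover have "poly (of_int_poly g) w = 0"
  proof -
    have "map_poly of_rat h = Polynomial.smult (of_rat r) (of_int_poly g :: complex poly)"
      by (subst h_rg(1)) (simp add: hom_distribs map_poly_map_poly o_def)
    then show ?thesis
      using hw h_rg(2) by simp
  qed
  ultimately show ?thesis
    by (rule that)
qed

lemma finite_roots_of_unity_bounded_degree:
  "finite {w :: complex. (\<exists>n>0. w ^ n = 1) \<and>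
      (\<exists>p :: rat poly. p \<noteq> 0 \<and> degree p \<le> D \<and> poly (map_poly of_rat p) w = 0)}"
proof (rule finite_subset)
  let ?G = "{g :: int poly. degree g \<le> D \<and> (\<forall>k. \<bar>Polynomial.coeff g k\<bar> \<le> 2 ^ D)} - {0}"
  show "finite (\<Union>g\<in>?G. {w :: complex. poly (of_int_poly g) w = 0})"
  proof (rule finite_UN_I)
    show "finite ?G"
      using finite_int_polys_bounded by (rule finite_Diff)
    show "finite {w :: complex. poly (of_int_poly g) w = 0}" if "g \<in> ?G" for g
      using that by (intro poly_roots_finite) simp
  qed
  show "{w :: complex. (\<exists>n>0. w ^ n = 1) \<and>
      (\<exists>p :: rat poly. p \<noteq> 0 \<and> degree p \<le> D \<and> poly (map_poly of_rat p) w = 0)}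
      \<subseteq> (\<Union>g\<in>?G. {w :: complex. poly (of_int_poly g) w = 0})"
  proof clarify
    fix w :: complex and n and p :: "rat poly"
    assume n: "n > 0" "w ^ n = 1" and p: "p \<noteq> 0" "degree p \<le> D" "poly (map_poly of_rat p) w = 0"
    obtain g where g: "g dvd Polynomial.monom 1 n - 1" "degree g \<le> degree p" "poly (of_int_poly g) w = 0"
      using vanishing_int_divisor_of_xn_minus_1[OF n p(1,3)] .
    have "g \<noteq> 0"
      using g(1) lead_coeff_xn_minus_1(2)[OF n(1)] by auto
    have deg: "degree g \<le> D"
      using g(2) p(2) by linarith
    have "\<bar>Polynomial.coeff g k\<bar> \<le> 2 ^ D" for k
    proof -
      have "(2 :: int) ^ degree g \<le> 2 ^ D"
        using deg by (rule power_increasing) simp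
      then show ?thesis
        using coeff_bound_dvd_xn_minus_1[OF n(1) g(1), of k] by linarith
    qed
    then have "g \<in> ?G"
      using \<open>g \<noteq> 0\<close> deg by simp
    then show "w \<in> (\<Union>g\<in>?G. {w :: complex. poly (of_int_poly g) w = 0})"
      using g(3) by blast
  qed
qed

section \<open>\<open>\<complex>\<close> as a vector space over \<open>\<rat>\<close>\<close>

interpretation rat_vs: vector_space "\<lambda>(r :: rat) (z :: complex). of_rat r * z"
  by unfold_locales (simp_all add: algebra_simps of_rat_add of_rat_mult)

lemma rat_vs_span_pair:
  "rat_vs.span {a, b} = {of_rat p * a + of_rat q * b | p q. True}"
proof -
  have "rat_vs.span {a, b} = {x. \<exists>p q. x - of_rat p * a = of_rat q * b}"
    by (simp add: rat_vs.span_insert rat_vs.span_singleton)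
  also have "\<dots> = {of_rat p * a + of_rat q * b | p q. True}"
    by (auto simp: diff_eq_eq add.commute)
  finally show ?thesis .
qed

lemma rat_vs_subspace_mult:
  "rat_vs.subspace S \<Longrightarrow> rat_vs.subspace {x. c * x \<in> S}"
  unfolding rat_vs.subspace_def by (simp add: distrib_left) (metis mult.left_commute)

lemma rat_vs_span_mult_closed:
  assumes G: "\<And>x y. x \<in> G \<Longrightarrow> y \<in> G \<Longrightarrow> x * y \<in> G"
    and x: "x \<in> rat_vs.span G" and y: "y \<in> rat_vs.span G"
  shows "x * y \<in> rat_vs.span G"
proof -
  have "g * y \<in> rat_vs.span G" if "g \<in> G" for g
  proof -
    have "G \<subseteq> {y. g * y \<in> rat_vs.span G}"
      using G that by (auto intro: rat_vs.span_base)
    then have "rat_vs.span G \<subseteq> {y. g * y \<in> rat_vs.span G}"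
      by (rule rat_vs.span_minimal[OF _ rat_vs_subspace_mult[OF rat_vs.subspace_span]])
    then show ?thesis
      using y by blast
  qed
  then have "G \<subseteq> {x. y * x \<in> rat_vs.span G}"
    by (auto simp: mult.commute)
  then have "rat_vs.span G \<subseteq> {x. y * x \<in> rat_vs.span G}"
    by (rule rat_vs.span_minimal[OF _ rat_vs_subspace_mult[OF rat_vs.subspace_span]])
  then show ?thesis
    using x by (auto simp: mult.commute)
qed

lemma rat_vs_span_power_closed:
  assumes G: "\<And>x y. x \<in> G \<Longrightarrow> y \<in> G \<Longrightarrow> x * y \<in> G" "1 \<in> G"
    and x: "x \<in> rat_vs.span G"
  shows "x ^ n \<in> rat_vs.span G"
proof (induction n)
  case 0
  show ?case
    using G(2) by (simp add: rat_vs.span_base)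
next
  case (Suc n)
  then show ?case
    using rat_vs_span_mult_closed[OF G(1) x] by simp
qed

lemma rat_vs_span_family_dependent:
  assumes "finite G" "card G \<le> D" "\<And>j. j \<le> D \<Longrightarrow> E j \<in> rat_vs.span G"
  obtains c :: "nat \<Rightarrow> rat" where "\<exists>j\<le>D. c j \<noteq> 0" "(\<Sum>j\<le>D. of_rat (c j) * E j) = 0"
proof (cases "inj_on E {..D}")
  case False
  then obtain i j where ij: "i \<le> D" "j \<le> D" "i \<noteq> j" "E i = E j"
    by (auto simp: inj_on_def)
  define c :: "nat \<Rightarrow> rat" where "c l = of_bool (l = i) - of_bool (l = j)" for l
  have "of_rat (c l) * E l = (if l = i then E l else 0) - (if l = j then E l else 0)" for l
    using ij(3) by (simp add: c_def)
  then have "(\<Sum>l\<le>D. of_rat (c l) * E l) = E i - E j"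
    using ij(1,2) by (simp add: sum_subtractf)
  also have "\<dots> = 0"
    using ij(4) by simp
  finally have "(\<Sum>l\<le>D. of_rat (c l) * E l) = 0" .
  moreover have "c i \<noteq> 0"
    using ij(3) by (simp add: c_def)
  ultimately show ?thesis
    using ij(1) by (intro that[of c]) auto
next
  case True
  define S where "S = E ` {..D}"
  have "finite S"
    by (simp add: S_def)
  have "rat_vs.dependent S"
  proof (rule ccontr)
    assume "rat_vs.independent S"
    moreover have "S \<subseteq> rat_vs.span G"
      using assms(3) by (auto simp: S_def)
    ultimately have "card S \<le> card G"
      using rat_vs.independent_span_bound[OF assms(1)] by blast
    then show False
      using True assms(2) by (simp add: S_def card_image)
  qed
  then obtain u where u: "\<exists>v\<in>S. u v \<noteq> 0" "(\<Sum>v\<in>S. of_rat (u v) * v) = 0"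
    unfolding rat_vs.dependent_finite[OF \<open>finite S\<close>] by blast
  have "(\<Sum>j\<le>D. of_rat (u (E j)) * E j) = 0"
    using u(2) by (simp add: S_def sum.reindex[OF True])
  moreover obtain j where "j \<le> D" "u (E j) \<noteq> 0"
    using u(1) by (auto simp: S_def)
  ultimately show ?thesis
    by (intro that[of "\<lambda>j. u (E j)"]) auto
qed

lemma complex_of_real_of_rat [simp]: "complex_of_real (of_rat q) = of_rat q"
  by (cases q) (simp add: of_rat_rat)

lemma Re_of_rat [simp]: "Re (of_rat r) = of_rat r"
  and Im_of_rat [simp]: "Im (of_rat r) = 0"
  by (simp_all flip: complex_of_real_of_rat)

lemma nonzero_if_ratio_nonreal: "w / v \<notin> \<real> \<Longrightarrow> v \<noteq> (0 :: complex)"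
  by (erule contrapos_nn) simp

lemma real_combination_eq_0:
  fixes v w :: complex
  assumes "w / v \<notin> \<real>" "of_real r * v + of_real s * w = 0"
  shows "r = 0 \<and> s = 0"
proof (cases "s = 0")
  case True
  moreover have "v \<noteq> 0"
    using assms(1) by (rule nonzero_if_ratio_nonreal)
  ultimately show ?thesis
    using assms(2) by simp
next
  case False
  then have "w / v = of_real (- r / s)"
    using assms by (auto simp: field_simps add_eq_0_iff)
  then show ?thesis
    using assms(1) by simp
qed

lemma rat_vs_span_pair_subset:
  assumes "u \<in> rat_vs.span {a, b}" "u' \<in> rat_vs.span {a, b}" "u' / u \<notin> \<real>"
  shows "rat_vs.span {a, b} \<subseteq> rat_vs.span {u, u'}"
proof -
  have "u \<noteq> 0"
    using assms(3) by (rule nonzero_if_ratio_nonreal)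
  have "u \<noteq> u'"
    using assms(3) \<open>u \<noteq> 0\<close> by auto
  have "u' \<notin> rat_vs.span {u}"
  proof
    assume "u' \<in> rat_vs.span {u}"
    then obtain k where "u' = of_rat k * u"
      by (auto simp: rat_vs.span_singleton)
    then show False
      using assms(3) \<open>u \<noteq> 0\<close> by (simp flip: complex_of_real_of_rat)
  qed
  then have "rat_vs.independent {u', u}"
    using \<open>u \<noteq> 0\<close> \<open>u \<noteq> u'\<close> by (simp add: rat_vs.independent_insert rat_vs.dependent_single)
  then have indep: "rat_vs.independent {u, u'}"
    by (simp add: insert_commute)
  have "card {a, b} \<le> 2"
    by (cases "a = b") simp_all
  show ?thesis
  proof
    fix x assume x: "x \<in> rat_vs.span {a, b}"
    show "x \<in> rat_vs.span {u, u'}"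
    proof (rule ccontr)
      assume x_notin: "x \<notin> rat_vs.span {u, u'}"
      then have "rat_vs.independent (insert x {u, u'})"
        using indep by (rule rat_vs.independent_insertI)
      moreover have "insert x {u, u'} \<subseteq> rat_vs.span {a, b}"
        using x assms(1,2) by simp
      ultimately have "card (insert x {u, u'}) \<le> card {a, b}"
        using rat_vs.independent_span_bound[of "{a, b}" "insert x {u, u'}"] by simp
      moreover have "x \<notin> {u, u'}"
        using x_notin rat_vs.span_base[of _ "{u, u'}"] by blast
      ultimately show False
        using \<open>u \<noteq> u'\<close> \<open>card {a, b} \<le> 2\<close> by simp
    qed
  qed
qed

section \<open>Cotangents of rational angles\<close>

lemma rat_poly_of_vanishing_combination:
  fixes w :: complex
  assumes "\<exists>j\<le>D. c j \<noteq> 0" and "(\<Sum>j\<le>D. of_rat (c j) * w ^ j) = 0"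
  obtains p :: "rat poly" where "p \<noteq> 0" "degree p \<le> D" "poly (map_poly of_rat p) w = 0"
proof -
  define p where "p = (\<Sum>j\<le>D. Polynomial.monom (c j) j)"
  have coeff: "Polynomial.coeff p i = (if i \<le> D then c i else 0)" for i
    by (simp add: p_def coeff_sum coeff_monom)
  have "p \<noteq> 0"
    using assms(1) coeff by (metis coeff_0)
  moreover have "degree p \<le> D"
    using coeff by (intro degree_le) auto
  moreover have "poly (map_poly of_rat p) w = 0"
    using assms(2) by (simp add: p_def hom_distribs poly_sum poly_monom)
  ultimately show ?thesis
    by (rule that)
qed

lemma rat_poly_root_via_square:
  fixes w :: complex
  assumes "q \<noteq> 0" and "poly (map_poly of_rat q) (w ^ 2) = 0"
  obtains p :: "rat poly" where "p \<noteq> 0" "degree p = 2 * degree q" "poly (map_poly of_rat p) w = 0"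
proof -
  define p where "p = pcompose q [:0, 0, 1:]"
  have "p \<noteq> 0"
    using assms(1) pcompose_eq_0[of q "[:0, 0, 1:]"] by (auto simp: p_def)
  moreover have "degree p = 2 * degree q"
    by (simp add: p_def degree_pcompose)
  moreover have "poly (map_poly of_rat p) w = 0"
    using assms(2) by (simp add: p_def hom_distribs poly_pcompose power2_eq_square)
  ultimately show ?thesis
    by (rule that)
qed

lemma weighted_geometric_sum_root_of_unity:
  fixes w :: "'a :: field"
  assumes "w ^ m = 1" and "w \<noteq> 1"
  shows "(w - 1) * (\<Sum>j<m. of_nat j * w ^ j) = of_nat m"
proof -
  have telescope: "(w - 1) * (\<Sum>j<k. of_nat j * w ^ j) = of_nat k * w ^ k - (\<Sum>j<k. w ^ Suc j)" for k
    by (induction k) (simp_all add: algebra_simps)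
  have "(\<Sum>j<m. w ^ Suc j) = w * (\<Sum>j<m. w ^ j)"
    by (simp add: sum_distrib_left)
  also have "(\<Sum>j<m. w ^ j) = 0"
    using assms by (simp add: sum_gp_strict)
  finally show ?thesis
    using telescope[of m] assms(1) by simp
qed

lemma imaginary_unit_power_4dvd:
  assumes "4 dvd M"
  shows "\<i> ^ M = 1"
proof -
  obtain k where "M = 4 * k"
    using assms by (elim dvdE)
  moreover have "\<i> ^ 4 = 1"
    by (simp add: power4_eq_xxxx)
  ultimately show ?thesis
    by (simp add: power_mult)
qed

text \<open>For \<open>\<zeta> = cis \<theta>\<close> this is \<open>cot \<theta>\<close>.\<close>
definition cot_phase :: "complex \<Rightarrow> complex" where
  "cot_phase \<zeta> = \<i> * (\<zeta>\<^sup>2 + 1) / (\<zeta>\<^sup>2 - 1)"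

lemma cot_phase_in_cyclotomic_span:
  assumes M: "M > 0" "4 dvd M" and \<zeta>: "\<zeta> ^ M = 1" "\<zeta>\<^sup>2 \<noteq> 1"
  shows "cot_phase \<zeta> \<in> rat_vs.span {z. z ^ M = 1}"
proof -
  let ?G = "{z :: complex. z ^ M = 1}"
  have mult: "\<And>x y. x \<in> ?G \<Longrightarrow> y \<in> ?G \<Longrightarrow> x * y \<in> ?G"
    by (simp add: power_mult_distrib)
  have pow: "(\<zeta>\<^sup>2) ^ j \<in> ?G" for j
  proof -
    have "((\<zeta>\<^sup>2) ^ j) ^ M = (\<zeta> ^ M) ^ (2 * j)"
      by (simp only: power_mult[symmetric] ac_simps)
    then show ?thesis
      using \<zeta>(1) by simp
  qed
  define S where "S = (\<Sum>j<M. of_nat j * (\<zeta>\<^sup>2) ^ j)"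
  have "(\<zeta>\<^sup>2) ^ M = 1"
    using pow[of 1] by simp
  then have "(\<zeta>\<^sup>2 - 1) * S = of_nat M"
    unfolding S_def using \<zeta>(2) by (rule weighted_geometric_sum_root_of_unity)
  then have inverse: "1 / (\<zeta>\<^sup>2 - 1) = of_rat (1 / of_nat M) * S"
    using M(1) \<zeta>(2) by (simp add: of_rat_divide field_simps)
  have S_span: "S \<in> rat_vs.span ?G"
    unfolding S_def
  proof (rule rat_vs.span_sum)
    show "of_nat j * (\<zeta>\<^sup>2) ^ j \<in> rat_vs.span ?G" for j
      using rat_vs.span_scale[OF rat_vs.span_base[OF pow[of j]], of "of_nat j"] by simp
  qed
  have numerator_span: "\<i> * (\<zeta>\<^sup>2 + 1) \<in> rat_vs.span ?G"
  proof (intro rat_vs_span_mult_closed[OF mult] rat_vs.span_add rat_vs.span_base)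
    show "\<i> \<in> ?G"
      using M(2) by (simp add: imaginary_unit_power_4dvd)
    show "\<zeta>\<^sup>2 \<in> ?G"
      using pow[of 1] by simp
    show "1 \<in> ?G"
      by simp
  qed
  have "cot_phase \<zeta> = (\<i> * (\<zeta>\<^sup>2 + 1)) * (of_rat (1 / of_nat M) * S)"
    unfolding cot_phase_def inverse[symmetric] by simp
  then show ?thesis
    using rat_vs_span_mult_closed[OF mult numerator_span rat_vs.span_scale[OF S_span]] by simp
qed

lemma cot_phase_cayley:
  assumes "\<zeta>\<^sup>2 \<noteq> 1"
  shows "\<zeta>\<^sup>2 * (cot_phase \<zeta> - \<i>) = cot_phase \<zeta> + \<i>" and "cot_phase \<zeta> \<noteq> \<i>"
proof -
  have "\<zeta>\<^sup>2 - 1 \<noteq> 0"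
    using assms by simp
  then show cayley: "\<zeta>\<^sup>2 * (cot_phase \<zeta> - \<i>) = cot_phase \<zeta> + \<i>"
    by (simp add: cot_phase_def field_simps)
  show "cot_phase \<zeta> \<noteq> \<i>"
  proof
    assume "cot_phase \<zeta> = \<i>"
    with cayley have "\<i> + \<i> = 0"
      by simp
    then show False
      by (simp add: complex_eq_iff)
  qed
qed

lemma root_of_rat_poly_of_cot_phase_in_span:
  assumes G: "finite G" "\<And>x y. x \<in> G \<Longrightarrow> y \<in> G \<Longrightarrow> x * y \<in> G" "1 \<in> G" "\<i> \<in> G"
    and \<zeta>: "\<zeta>\<^sup>2 \<noteq> 1" "cot_phase \<zeta> \<in> rat_vs.span G"
  shows "\<exists>p :: rat poly. p \<noteq> 0 \<and> degree p \<le> 2 * card G \<and> poly (map_poly of_rat p) \<zeta> = 0"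
proof -
  define e f where "e = cot_phase \<zeta> - \<i>" and "f = cot_phase \<zeta> + \<i>"
  have wef: "\<zeta>\<^sup>2 * e = f" and "e \<noteq> 0"
    using cot_phase_cayley[OF \<zeta>(1)] by (simp_all add: e_def f_def)
  have "\<i> \<in> rat_vs.span G"
    using G(4) by (rule rat_vs.span_base)
  then have ef: "e \<in> rat_vs.span G" "f \<in> rat_vs.span G"
    unfolding e_def f_def using \<zeta>(2) by (simp_all add: rat_vs.span_diff rat_vs.span_add)
  let ?D = "card G"
  (* E j = (\<zeta>\<^sup>2) ^ j * e ^ D: clearing the denominator of \<zeta>\<^sup>2 = f / e keeps the powers of \<zeta>\<^sup>2
     inside the span, which is closed under products but not known to be closed under inverses. *)
  define E where "E j = f ^ j * e ^ (?D - j)" for j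
  have E_span: "E j \<in> rat_vs.span G" if "j \<le> ?D" for j
    unfolding E_def using rat_vs_span_power_closed[OF G(2,3)] ef
    by (intro rat_vs_span_mult_closed[OF G(2)]) auto
  obtain c where c: "\<exists>j\<le>?D. c j \<noteq> 0" "(\<Sum>j\<le>?D. of_rat (c j) * E j) = 0"
    by (rule rat_vs_span_family_dependent[OF G(1) order_refl E_span])
  have "E j = (\<zeta>\<^sup>2) ^ j * e ^ ?D" if "j \<le> ?D" for j
  proof -
    have "E j = (\<zeta>\<^sup>2) ^ j * (e ^ j * e ^ (?D - j))"
      by (simp add: E_def wef[symmetric] power_mult_distrib)
    also have "e ^ j * e ^ (?D - j) = e ^ ?D"
      using that by (simp add: power_add[symmetric])
    finally show ?thesis .
  qed
  then have "(\<Sum>j\<le>?D. of_rat (c j) * (\<zeta>\<^sup>2) ^ j) * e ^ ?D = 0"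
    using c(2) by (simp add: sum_distrib_right mult.assoc)
  then have "(\<Sum>j\<le>?D. of_rat (c j) * (\<zeta>\<^sup>2) ^ j) = 0"
    using \<open>e \<noteq> 0\<close> by simp
  then obtain q where q: "q \<noteq> 0" "degree q \<le> ?D" "poly (map_poly of_rat q) (\<zeta>\<^sup>2) = 0"
    by (rule rat_poly_of_vanishing_combination[OF c(1)])
  obtain p where "p \<noteq> 0" "degree p = 2 * degree q" "poly (map_poly of_rat p) \<zeta> = 0"
    using rat_poly_root_via_square[OF q(1,3)] .
  then show ?thesis
    using q(2) by (intro exI[of _ p]) simp
qed

lemma cot_phases_in_cyclotomic_span:
  assumes "finite U"
    and Z: "\<And>\<zeta>. \<zeta> \<in> Z \<Longrightarrow> (\<exists>n>0. \<zeta> ^ n = 1) \<and> \<zeta>\<^sup>2 \<noteq> 1 \<and> cot_phase \<zeta> \<in> rat_vs.span U"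
  obtains M where "M > 0" "4 dvd M" "cot_phase ` Z \<subseteq> rat_vs.span {z. z ^ M = 1}"
proof -
  obtain B where B: "B \<subseteq> cot_phase ` Z" "rat_vs.independent B" "cot_phase ` Z \<subseteq> rat_vs.span B"
    using rat_vs.maximal_independent_subset by blast
  have "cot_phase ` Z \<subseteq> rat_vs.span U"
    using Z by blast
  then have "finite B"
    using rat_vs.independent_span_bound[OF assms(1) B(2)] B(1) by blast
  then obtain Z0 where Z0: "Z0 \<subseteq> Z" "finite Z0" "B = cot_phase ` Z0"
    using finite_subset_image[OF _ B(1)] by blast
  have "\<forall>\<zeta>\<in>Z0. \<exists>n. n > 0 \<and> \<zeta> ^ n = 1"
    using Z Z0(1) by blast
  then obtain ord where ord: "\<forall>\<zeta>\<in>Z0. ord \<zeta> > 0 \<and> \<zeta> ^ ord \<zeta> = 1"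
    by (rule bchoice[THEN exE])
  define M where "M = 4 * (\<Prod>\<zeta>\<in>Z0. ord \<zeta>)"
  have M: "M > 0" "4 dvd M"
    using ord Z0(2) by (simp_all add: M_def prod_pos)
  have "cot_phase \<zeta> \<in> rat_vs.span {z. z ^ M = 1}" if "\<zeta> \<in> Z0" for \<zeta>
  proof (rule cot_phase_in_cyclotomic_span[OF M])
    have "ord \<zeta> dvd M"
      using Z0(2) that by (simp add: M_def dvd_prodI)
    then obtain k where "M = ord \<zeta> * k"
      by (elim dvdE)
    then show "\<zeta> ^ M = 1"
      using ord that by (simp add: power_mult)
    show "\<zeta>\<^sup>2 \<noteq> 1"
      using Z Z0(1) that by blast
  qed
  then have "B \<subseteq> rat_vs.span {z. z ^ M = 1}"
    using Z0(3) by blast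
  then have "rat_vs.span B \<subseteq> rat_vs.span {z. z ^ M = 1}"
    by (rule rat_vs.span_minimal[OF _ rat_vs.subspace_span])
  then show ?thesis
    using B(3) by (intro that[OF M]) blast
qed

lemma finite_roots_of_unity_with_cot_phase_in_finite_span:
  assumes "finite U"
    and Z: "\<And>\<zeta>. \<zeta> \<in> Z \<Longrightarrow> (\<exists>n>0. \<zeta> ^ n = 1) \<and> \<zeta>\<^sup>2 \<noteq> 1 \<and> cot_phase \<zeta> \<in> rat_vs.span U"
  shows "finite Z"
proof -
  obtain M where M: "M > 0" "4 dvd M" "cot_phase ` Z \<subseteq> rat_vs.span {z. z ^ M = 1}"
    using cot_phases_in_cyclotomic_span[OF assms] .
  let ?G = "{z :: complex. z ^ M = 1}"
  have G: "finite ?G" "\<And>x y. x \<in> ?G \<Longrightarrow> y \<in> ?G \<Longrightarrow> x * y \<in> ?G" "1 \<in> ?G" "\<i> \<in> ?G"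
    using M(1,2) by (simp_all add: finite_roots_unity power_mult_distrib imaginary_unit_power_4dvd)
  have "Z \<subseteq> {\<zeta>. (\<exists>n>0. \<zeta> ^ n = 1) \<and>
      (\<exists>p :: rat poly. p \<noteq> 0 \<and> degree p \<le> 2 * card ?G \<and> poly (map_poly of_rat p) \<zeta> = 0)}"
  proof
    fix \<zeta> assume "\<zeta> \<in> Z"
    then have "cot_phase \<zeta> \<in> rat_vs.span ?G"
      using M(3) by blast
    then show "\<zeta> \<in> {\<zeta>. (\<exists>n>0. \<zeta> ^ n = 1) \<and>
        (\<exists>p :: rat poly. p \<noteq> 0 \<and> degree p \<le> 2 * card ?G \<and> poly (map_poly of_rat p) \<zeta> = 0)}"
      using root_of_rat_poly_of_cot_phase_in_span[OF G] Z[OF \<open>\<zeta> \<in> Z\<close>] by simp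
  qed
  then show ?thesis
    using finite_roots_of_unity_bounded_degree by (rule finite_subset)
qed

lemma sgn_nonreal: "(z :: complex) \<notin> \<real> \<Longrightarrow> sgn z \<notin> \<real>"
  by (auto simp: complex_is_Real_iff)

lemma sgn_root_of_unity_if_Arg_rational:
  assumes "z \<noteq> 0" "q \<in> \<rat>" "Arg z = q * pi"
  shows "\<exists>n>0. sgn z ^ n = 1"
proof -
  obtain k l where kl: "l > 0" "q = of_int k / of_int l"
    using assms(2) by (elim Rats_cases') blast
  have "sgn z ^ nat (2 * l) = cis (real (nat (2 * l)) * Arg z)"
    using assms(1) by (simp add: cis_Arg[symmetric] Complex.DeMoivre)
  also have "real (nat (2 * l)) * Arg z = 2 * pi * of_int k"
    using kl by (simp add: assms(3))
  also have "cis (2 * pi * of_int k) = 1"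
    by (simp add: complex_eq_iff)
  finally show ?thesis
    using kl(1) by (intro exI[of _ "nat (2 * l)"]) simp
qed

lemma cot_phase_sgn:
  assumes "z \<notin> \<real>"
  shows "cot_phase (sgn z) = of_real (Re z / Im z)"
proof -
  let ?\<zeta> = "sgn z"
  have "z \<noteq> 0" "Im z \<noteq> 0" "Im ?\<zeta> \<noteq> 0"
    using assms sgn_nonreal[OF assms] by (auto simp: complex_is_Real_iff)
  have unit: "?\<zeta> * cnj ?\<zeta> = 1"
    using complex_norm_square[of ?\<zeta>] \<open>z \<noteq> 0\<close> by (simp add: norm_sgn)
  have "?\<zeta>\<^sup>2 + 1 = ?\<zeta> * (?\<zeta> + cnj ?\<zeta>)" "?\<zeta>\<^sup>2 - 1 = ?\<zeta> * (?\<zeta> - cnj ?\<zeta>)"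
    using unit by (simp_all add: power2_eq_square algebra_simps)
  then have "cot_phase ?\<zeta> = \<i> * (?\<zeta> + cnj ?\<zeta>) / (?\<zeta> - cnj ?\<zeta>)"
    using \<open>z \<noteq> 0\<close> by (simp add: cot_phase_def)
  also have "\<dots> = of_real (Re ?\<zeta> / Im ?\<zeta>)"
    using \<open>Im ?\<zeta> \<noteq> 0\<close> by (simp add: complex_add_cnj complex_diff_cnj field_simps)
  also have "Re ?\<zeta> / Im ?\<zeta> = Re z / Im z"
    using \<open>z \<noteq> 0\<close> by simp
  finally show ?thesis .
qed

lemma divide_as_mult_cnj:
  assumes "v \<noteq> 0"
  shows "w / v = w * cnj v / of_real ((cmod v)\<^sup>2)"
proof -
  have "w / v = (w * cnj v) / (v * cnj v)"
    using assms by simp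
  also have "v * cnj v = of_real ((cmod v)\<^sup>2)"
    by (rule complex_norm_square[symmetric])
  finally show ?thesis .
qed

lemma cot_of_ratio_in_span:
  fixes a b v1 v2 :: complex
  defines "\<beta> \<equiv> b * cnj a"
  assumes v: "v1 \<in> rat_vs.span {a, b}" "v2 \<in> rat_vs.span {a, b}" and nonreal: "v2 / v1 \<notin> \<real>"
  shows "of_real (Re (v2 / v1) / Im (v2 / v1))
    \<in> rat_vs.span (of_real ` {Re (a * cnj a) / Im \<beta>, Re (b * cnj b) / Im \<beta>, Re \<beta> / Im \<beta>})"
proof -
  obtain p q r s where v1: "v1 = of_rat p * a + of_rat q * b" and v2: "v2 = of_rat r * a + of_rat s * b"
    using v by (auto simp: rat_vs_span_pair)
  define w where "w = v2 * cnj v1"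
  have "v1 \<noteq> 0"
    using nonreal by (rule nonzero_if_ratio_nonreal)
  then have ratio: "v2 / v1 = w / of_real ((cmod v1)\<^sup>2)"
    unfolding w_def by (rule divide_as_mult_cnj)
  have "(cmod v1)\<^sup>2 \<noteq> 0"
    using \<open>v1 \<noteq> 0\<close> by simp
  then have "Im w \<noteq> 0" and cot_w: "Re (v2 / v1) / Im (v2 / v1) = Re w / Im w"
    using nonreal by (simp_all add: ratio complex_is_Real_iff Re_divide_of_real Im_divide_of_real)
  define d where "d = s * p - r * q"
  have Re_w: "Re w = of_rat (r * p) * Re (a * cnj a) + of_rat (s * q) * Re (b * cnj b) + of_rat (r * q + s * p) * Re \<beta>"
    unfolding w_def v1 v2 \<beta>_def by (simp add: of_rat_mult of_rat_add algebra_simps)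
  have Im_w: "Im w = of_rat d * Im \<beta>"
    unfolding w_def v1 v2 \<beta>_def d_def by (simp add: of_rat_mult of_rat_diff algebra_simps)
  have "of_rat d \<noteq> (0 :: real)" "Im \<beta> \<noteq> 0"
    using \<open>Im w \<noteq> 0\<close> by (auto simp: Im_w)
  then have "(of_rat (r * p) * X + of_rat (s * q) * Y + of_rat (r * q + s * p) * W) / (of_rat d * Im \<beta>)
      = of_rat (r * p / d) * (X / Im \<beta>) + of_rat (s * q / d) * (Y / Im \<beta>) + of_rat ((r * q + s * p) / d) * (W / Im \<beta>)"
    for X Y W :: real
    by (simp add: of_rat_divide field_simps)
  then have "Re w / Im w = of_rat (r * p / d) * (Re (a * cnj a) / Im \<beta>) + of_rat (s * q / d) * (Re (b * cnj b) / Im \<beta>)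
      + of_rat ((r * q + s * p) / d) * (Re \<beta> / Im \<beta>)"
    unfolding Re_w Im_w .
  then have eq: "complex_of_real (Re (v2 / v1) / Im (v2 / v1)) =
      of_rat (r * p / d) * of_real (Re (a * cnj a) / Im \<beta>) + of_rat (s * q / d) * of_real (Re (b * cnj b) / Im \<beta>)
      + of_rat ((r * q + s * p) / d) * of_real (Re \<beta> / Im \<beta>)"
    unfolding cot_w by (simp only: of_real_add of_real_mult complex_of_real_of_rat[symmetric])
  show ?thesis
    unfolding eq by (intro rat_vs.span_add rat_vs.span_scale rat_vs.span_base) auto
qed

definition rational_angle_phases :: "complex set \<Rightarrow> complex set" where
  "rational_angle_phases V =
    {sgn (v2 / v1) | v1 v2. v1 \<in> V \<and> v2 \<in> V \<and> v2 / v1 \<notin> \<real> \<and> (\<exists>q\<in>\<rat>. Arg (v2 / v1) = q * pi)}"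

lemma rational_angle_phase_nonreal: "\<zeta> \<in> rational_angle_phases V \<Longrightarrow> \<zeta> \<notin> \<real>"
  unfolding rational_angle_phases_def using sgn_nonreal by blast

lemma finite_rational_angle_phases:
  assumes V: "V = rat_vs.span {a, b}"
  shows "finite (rational_angle_phases V)"
  unfolding rational_angle_phases_def
proof (rule finite_roots_of_unity_with_cot_phase_in_finite_span)
  define \<beta> where "\<beta> = b * cnj a"
  let ?U = "of_real ` {Re (a * cnj a) / Im \<beta>, Re (b * cnj b) / Im \<beta>, Re \<beta> / Im \<beta>} :: complex set"
  show "finite ?U"
    by simp
  fix \<zeta>
  assume "\<zeta> \<in> {sgn (v2 / v1) | v1 v2. v1 \<in> V \<and> v2 \<in> V \<and> v2 / v1 \<notin> \<real> \<and> (\<exists>q\<in>\<rat>. Arg (v2 / v1) = q * pi)}"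
  then obtain v1 v2 q where v: "v1 \<in> V" "v2 \<in> V" "v2 / v1 \<notin> \<real>" "q \<in> \<rat>" "Arg (v2 / v1) = q * pi"
    and \<zeta>: "\<zeta> = sgn (v2 / v1)"
    by blast
  have "v2 / v1 \<noteq> 0"
    using v(3) by auto
  show "(\<exists>n>0. \<zeta> ^ n = 1) \<and> \<zeta>\<^sup>2 \<noteq> 1 \<and> cot_phase \<zeta> \<in> rat_vs.span ?U"
    unfolding \<zeta> cot_phase_sgn[OF v(3)]
    using sgn_root_of_unity_if_Arg_rational[OF \<open>v2 / v1 \<noteq> 0\<close> v(4,5)] sgn_nonreal[OF v(3)]
      cot_of_ratio_in_span[of v1 a b v2, folded \<beta>_def] v(1-3) V
    by (auto simp: power2_eq_1_iff)
qed

section \<open>Lines of a space\<close>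

lemma rline_scale:
  assumes "t \<noteq> 0"
  shows "rline (of_real t * u) = rline u"
proof (intro equalityI subsetI)
  fix x assume "x \<in> rline (of_real t * u)"
  then obtain s where "x = of_real s * (of_real t * u)"
    by (auto simp: rline_def)
  then have "x = of_real (s * t) * u"
    by simp
  then show "x \<in> rline u"
    unfolding rline_def by blast
next
  fix x assume "x \<in> rline u"
  then obtain s where "x = of_real s * u"
    by (auto simp: rline_def)
  then have "x = of_real (s / t) * (of_real t * u)"
    using assms by simp
  then show "x \<in> rline (of_real t * u)"
    unfolding rline_def by blast
qed

lemma rline_mult: "rline (c * u) = (\<lambda>x. c * x) ` rline u"
  unfolding rline_def by (auto simp: algebra_simps)

lemma rline_eq_if_ratio_real:
  assumes "v \<noteq> 0" "w \<noteq> 0" "w / v \<in> \<real>"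
  shows "rline w = rline v"
proof -
  obtain t where t: "w / v = of_real t"
    using assms(3) by (auto elim: Reals_cases)
  then have "w = of_real t * v" "t \<noteq> 0"
    using assms(1,2) by (auto simp: field_simps)
  then show ?thesis
    by (simp add: rline_scale)
qed

lemma sgn_ratio_mult:
  assumes "v \<noteq> 0" "w \<noteq> 0"
  shows "sgn (w / v) * v = of_real (cmod v / cmod w) * w"
  using assms by (simp add: sgn_eq norm_divide field_simps)

lemma rline_sgn_ratio:
  assumes "v \<noteq> 0" "w \<noteq> 0"
  shows "rline w = (\<lambda>x. sgn (w / v) * x) ` rline v"
proof -
  have "rline w = rline (of_real (cmod v / cmod w) * w)"
    using assms by (intro rline_scale[symmetric]) simp
  also have "\<dots> = rline (sgn (w / v) * v)"
    by (simp only: sgn_ratio_mult[OF assms])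
  finally show ?thesis
    by (simp only: rline_mult)
qed

lemma is_CM_if_mult_preserves_basis:
  assumes V: "V = rat_vs.span {a, b}" and v: "v1 \<in> V" "v2 \<in> V" "v2 / v1 \<notin> \<real>"
    and \<mu>: "\<mu> \<notin> \<real>" "\<mu> * v1 \<in> V" "\<mu> * v2 \<in> V"
  shows "is_CM V"
proof -
  have "V \<subseteq> rat_vs.span {v1, v2}"
    using rat_vs_span_pair_subset v V by simp
  also have "rat_vs.span {v1, v2} \<subseteq> {x. \<mu> * x \<in> V}"
    by (rule rat_vs.span_minimal) (use \<mu>(2,3) V rat_vs_subspace_mult[OF rat_vs.subspace_span] in auto)
  finally have "(\<lambda>x. \<mu> * x) ` V \<subseteq> V"
    by blast
  moreover have "\<mu> \<notin> \<rat>"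
    using \<mu>(1) by (metis Rats_cases Reals_of_real complex_of_real_of_rat)
  ultimately show ?thesis
    unfolding is_CM_def by blast
qed

lemma nonreal_ratio_after_rotation:
  fixes \<zeta> v1 v2 w1 w2 :: complex
  assumes "v2 / v1 \<notin> \<real>" "\<zeta> \<noteq> 0" "\<zeta> * v1 = of_real \<alpha>1 * w1" "\<zeta> * v2 = of_real \<alpha>2 * w2"
  shows "w2 / w1 \<notin> \<real>"
proof -
  have "v1 \<noteq> 0" "v2 \<noteq> 0"
    using assms(1) by auto
  then have "\<alpha>1 \<noteq> 0" "\<alpha>2 \<noteq> 0" "w1 \<noteq> 0"
    using assms(2-4) by auto
  have v12: "v1 = of_real \<alpha>1 * w1 / \<zeta>" "v2 = of_real \<alpha>2 * w2 / \<zeta>"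
    using assms(2-4) by (metis nonzero_mult_div_cancel_left)+
  have "v2 / v1 = of_real (\<alpha>2 / \<alpha>1) * (w2 / w1)"
    unfolding v12 using assms(2) \<open>\<alpha>1 \<noteq> 0\<close> \<open>w1 \<noteq> 0\<close> by (simp add: field_simps)
  then show ?thesis
    using assms(1) by (metis Reals_mult Reals_of_real)
qed

lemma rational_scaling_ratio:
  fixes \<zeta> v1 v2 v3 w1 w2 w3 :: complex
  assumes w: "w2 / w1 \<notin> \<real>"
    and rot: "\<zeta> * v1 = of_real \<alpha>1 * w1" "\<zeta> * v2 = of_real \<alpha>2 * w2" "\<zeta> * v3 = of_real \<alpha>3 * w3"
    and xy: "v3 = of_rat x * v1 + of_rat y * v2" "x \<noteq> 0" "y \<noteq> 0"
    and mn: "w3 = of_rat m * w1 + of_rat n * w2" and "\<alpha>1 \<noteq> 0"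
  shows "\<alpha>2 = of_rat (n * x / (m * y)) * \<alpha>1"
proof -
  have "of_real (of_rat x * \<alpha>1 - \<alpha>3 * of_rat m) * w1 + of_real (of_rat y * \<alpha>2 - \<alpha>3 * of_rat n) * w2
      = of_rat x * (\<zeta> * v1) + of_rat y * (\<zeta> * v2) - of_real \<alpha>3 * w3"
    unfolding rot mn by (simp add: algebra_simps)
  also have "\<dots> = 0"
    using rot(3) by (simp add: xy(1) algebra_simps)
  finally have "of_rat x * \<alpha>1 - \<alpha>3 * of_rat m = 0 \<and> of_rat y * \<alpha>2 - \<alpha>3 * of_rat n = 0"
    by (rule real_combination_eq_0[OF w])
  then have e1: "of_rat x * \<alpha>1 = \<alpha>3 * of_rat m" and e2: "of_rat y * \<alpha>2 = \<alpha>3 * of_rat n"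
    by simp_all
  have "m \<noteq> 0"
    using e1 xy(2) \<open>\<alpha>1 \<noteq> 0\<close> by auto
  have "of_rat (n * x / (m * y)) * \<alpha>1 = of_rat n * (of_rat x * \<alpha>1) / (of_rat m * of_rat y)"
    by (simp add: of_rat_mult of_rat_divide)
  also have "\<dots> = \<alpha>3 * of_rat n / of_rat y"
    using \<open>m \<noteq> 0\<close> by (simp add: e1)
  also have "\<dots> = \<alpha>2"
    using e2 xy(3) by (simp add: field_simps)
  finally show ?thesis
    by simp
qed

lemma is_CM_if_three_lines_rotated:
  assumes V: "V = rat_vs.span {a, b}" and \<zeta>: "\<zeta> \<notin> \<real>"
    and v: "v1 \<in> V" "v2 \<in> V" "v3 \<in> V" "v2 / v1 \<notin> \<real>" "v3 / v1 \<notin> \<real>" "v3 / v2 \<notin> \<real>"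
    and w: "w1 \<in> V" "w2 \<in> V" "w3 \<in> V"
    and rot: "\<zeta> * v1 = of_real \<alpha>1 * w1" "\<zeta> * v2 = of_real \<alpha>2 * w2" "\<zeta> * v3 = of_real \<alpha>3 * w3"
  shows "is_CM V"
proof -
  have "\<zeta> \<noteq> 0" "v1 \<noteq> 0" "v2 \<noteq> 0"
    using \<zeta> v(4,6) by auto
  then have "\<alpha>1 \<noteq> 0"
    using rot(1) by auto
  have w_nonreal: "w2 / w1 \<notin> \<real>"
    using v(4) \<open>\<zeta> \<noteq> 0\<close> rot(1,2) by (rule nonreal_ratio_after_rotation)
  have "v3 \<in> rat_vs.span {v1, v2}" "w3 \<in> rat_vs.span {w1, w2}"
    using rat_vs_span_pair_subset[OF v(1,2,4)[unfolded V]] v(3)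
      rat_vs_span_pair_subset[OF w(1,2)[unfolded V] w_nonreal] w(3) V by blast+
  then obtain x y m n where xy: "v3 = of_rat x * v1 + of_rat y * v2"
    and mn: "w3 = of_rat m * w1 + of_rat n * w2"
    unfolding rat_vs_span_pair by blast
  have "x \<noteq> 0" "y \<noteq> 0"
    using v(5,6) \<open>v1 \<noteq> 0\<close> \<open>v2 \<noteq> 0\<close> xy by (auto simp flip: complex_of_real_of_rat)
  then have "\<alpha>2 = of_rat (n * x / (m * y)) * \<alpha>1"
    using rational_scaling_ratio[OF w_nonreal rot xy] mn \<open>\<alpha>1 \<noteq> 0\<close> by blast
  then have "\<zeta> / of_real \<alpha>1 * v2 = of_rat (n * x / (m * y)) * w2"
    using rot(2) \<open>\<alpha>1 \<noteq> 0\<close> by (simp add: field_simps flip: complex_of_real_of_rat)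
  moreover have "\<zeta> / of_real \<alpha>1 * v1 = w1"
    using rot(1) \<open>\<alpha>1 \<noteq> 0\<close> by (simp add: field_simps)
  moreover have "\<zeta> / of_real \<alpha>1 \<notin> \<real>"
  proof
    assume "\<zeta> / of_real \<alpha>1 \<in> \<real>"
    then have "\<zeta> / of_real \<alpha>1 * of_real \<alpha>1 \<in> \<real>"
      by (intro Reals_mult Reals_of_real)
    then show False
      using \<zeta> \<open>\<alpha>1 \<noteq> 0\<close> by simp
  qed
  ultimately show ?thesis
    using w(1,2) by (intro is_CM_if_mult_preserves_basis[OF V v(1,2,4)]) (auto simp: V rat_vs.span_scale)
qed

definition rotated_lines :: "complex set \<Rightarrow> complex \<Rightarrow> complex set set" where
  "rotated_lines V \<zeta> = {rline v | v. v \<in> V \<and> v \<noteq> 0 \<and> (\<exists>w\<in>V. \<exists>\<alpha>. \<zeta> * v = of_real \<alpha> * w)}"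

lemma finite_rotated_lines:
  assumes V: "V = rat_vs.span {a, b}" and "\<not> is_CM V" and \<zeta>: "\<zeta> \<notin> \<real>"
  shows "finite (rotated_lines V \<zeta>)"
proof -
  define L where "L = rotated_lines V \<zeta>"
  have "finite L"
  proof (rule ccontr)
    assume "infinite L"
    then obtain T where "T \<subseteq> L" "card T = 3"
      using infinite_arbitrarily_large by blast
    then obtain L1 L2 L3 where L: "L1 \<in> L" "L2 \<in> L" "L3 \<in> L" "L1 \<noteq> L2" "L2 \<noteq> L3" "L1 \<noteq> L3"
      unfolding card_3_iff by auto
    obtain v1 w1 \<alpha>1 where 1: "L1 = rline v1" "v1 \<in> V" "v1 \<noteq> 0" "w1 \<in> V" "\<zeta> * v1 = of_real \<alpha>1 * w1"
      using L(1) unfolding L_def rotated_lines_def by blast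
    obtain v2 w2 \<alpha>2 where 2: "L2 = rline v2" "v2 \<in> V" "v2 \<noteq> 0" "w2 \<in> V" "\<zeta> * v2 = of_real \<alpha>2 * w2"
      using L(2) unfolding L_def rotated_lines_def by blast
    obtain v3 w3 \<alpha>3 where 3: "L3 = rline v3" "v3 \<in> V" "v3 \<noteq> 0" "w3 \<in> V" "\<zeta> * v3 = of_real \<alpha>3 * w3"
      using L(3) unfolding L_def rotated_lines_def by blast
    have "v2 / v1 \<notin> \<real>"
      using L(4) 1(1,3) 2(1,3) rline_eq_if_ratio_real by metis
    moreover have "v3 / v1 \<notin> \<real>"
      using L(6) 1(1,3) 3(1,3) rline_eq_if_ratio_real by metis
    moreover have "v3 / v2 \<notin> \<real>"
      using L(5) 2(1,3) 3(1,3) rline_eq_if_ratio_real by metis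
    ultimately have "is_CM V"
      by (rule is_CM_if_three_lines_rotated[OF V \<zeta> 1(2) 2(2) 3(2) _ _ _ 1(4) 2(4) 3(4) 1(5) 2(5) 3(5)])
    with assms(2) show False
      by contradiction
  qed
  then show ?thesis
    unfolding L_def .
qed

lemma rational_angles_subset_rotations:
  "rational_angles V \<subseteq>
    (\<lambda>(\<zeta>, L). (L, (\<lambda>x. \<zeta> * x) ` L)) ` Sigma (rational_angle_phases V) (rotated_lines V)"
  (is "_ \<subseteq> ?R")
proof
  fix A assume "A \<in> rational_angles V"
  then obtain v1 v2 where v: "v1 \<in> V" "v2 \<in> V" "v1 \<noteq> 0" "v2 \<noteq> 0" "v2 / v1 \<notin> \<real>"
    "\<exists>q\<in>\<rat>. Arg (v2 / v1) = q * pi" and A: "A = (rline v1, rline v2)"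
    unfolding rational_angles_def by blast
  have "sgn (v2 / v1) \<in> rational_angle_phases V"
    using v unfolding rational_angle_phases_def by blast
  moreover have "rline v1 \<in> rotated_lines V (sgn (v2 / v1))"
    using v sgn_ratio_mult[OF v(3,4)] unfolding rotated_lines_def by blast
  ultimately show "A \<in> ?R"
    unfolding A rline_sgn_ratio[OF v(3,4)] by force
qed

theorem theorem4p3:
  fixes V :: "complex set"
  assumes "is_space V" and "\<not> is_CM V"
  shows "finite (rational_angles V)"
proof -
  obtain a b where V: "V = rat_vs.span {a, b}"
    using assms(1) by (auto simp: is_space_def Q_subspace_dim2_def rat_vs_span_pair)
  have "finite (rational_angle_phases V)"
    using V by (rule finite_rational_angle_phases)
  moreover have "finite (rotated_lines V \<zeta>)" if "\<zeta> \<in> rational_angle_phases V" for \<zeta>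
    using V assms(2) rational_angle_phase_nonreal[OF that] by (rule finite_rotated_lines)
  ultimately show ?thesis
    using rational_angles_subset_rotations[of V] by (meson finite_SigmaI finite_imageI finite_subset)
qed

end
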